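(* Let $n\ge 2$ and $k\in\{0,1,\dots,n-1\}$. The diagonalizable matrices (those similar to a diagonal matrix) contained in $(\mathbb{C}^{n\times n})_k$ form a Zariski dense subset of $(\mathbb{C}^{n\times n})_k$.
   Context: $(\mathbb{C}^{n\times n})_k=\{A\in\mathbb{C}^{n\times n}\mid \deg(m_A)\le n-k\}$, where $m_A$ is the minimal polynomial of $A$. *)

theory Defs
  imports "Jordan_Normal_Form.Matrix" "HOL-Computational_Algebra.Polynomial" Complex_Main
begin

fun horner_mat :: "nat \<Rightarrow> 'a::comm_ring_1 list \<Rightarrow> 'a mat \<Rightarrow> 'a mat" where
  "horner_mat n [] A = 0\<^sub>m n n"
| "horner_mat n (c # cs) A = c \<cdot>\<^sub>m 1\<^sub>m n + A * horner_mat n cs A"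

definition poly_mat :: "'a::comm_ring_1 poly \<Rightarrow> 'a mat \<Rightarrow> 'a mat" where
  "poly_mat p A = horner_mat (dim_row A) (coeffs p) A"

definition is_min_poly :: "'a::field mat \<Rightarrow> 'a poly \<Rightarrow> bool" where
  "is_min_poly A m \<longleftrightarrow> lead_coeff m = 1 \<and> poly_mat m A = 0\<^sub>m (dim_row A) (dim_row A) \<and>
     (\<forall>q. q \<noteq> 0 \<and> poly_mat q A = 0\<^sub>m (dim_row A) (dim_row A) \<longrightarrow> degree m \<le> degree q)"

definition min_poly :: "'a::field mat \<Rightarrow> 'a poly" where
  "min_poly A = (THE m. is_min_poly A m)"

definition mats_k :: "nat \<Rightarrow> nat \<Rightarrow> complex mat set" where
  "mats_k n k = {A \<in> carrier_mat n n. degree (min_poly A) \<le> n - k}"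

definition diagonalizable :: "complex mat \<Rightarrow> bool" where
  "diagonalizable A \<longleftrightarrow> (\<exists>D. D \<in> carrier_mat (dim_row A) (dim_row A) \<and> diagonal_mat D \<and> similar_mat A D)"

inductive_set mat_polyfun :: "nat \<Rightarrow> (complex mat \<Rightarrow> complex) set" for n where
  const: "(\<lambda>A. c) \<in> mat_polyfun n"
| entry: "i < n \<Longrightarrow> j < n \<Longrightarrow> (\<lambda>A. A $$ (i, j)) \<in> mat_polyfun n"
| add: "f \<in> mat_polyfun n \<Longrightarrow> g \<in> mat_polyfun n \<Longrightarrow> (\<lambda>A. f A + g A) \<in> mat_polyfun n"
| mult: "f \<in> mat_polyfun n \<Longrightarrow> g \<in> mat_polyfun n \<Longrightarrow> (\<lambda>A. f A * g A) \<in> mat_polyfun n"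

definition zariski_closed :: "nat \<Rightarrow> complex mat set \<Rightarrow> bool" where
  "zariski_closed n Z \<longleftrightarrow> (\<exists>F \<subseteq> mat_polyfun n. Z = {A \<in> carrier_mat n n. \<forall>f \<in> F. f A = 0})"

definition zariski_closure :: "nat \<Rightarrow> complex mat set \<Rightarrow> complex mat set" where
  "zariski_closure n S = \<Inter>{Z. zariski_closed n Z \<and> S \<subseteq> Z}"

text \<open>S is Zariski dense in X (X with the subspace topology).\<close>
definition zariski_dense_in :: "nat \<Rightarrow> complex mat set \<Rightarrow> complex mat set \<Rightarrow> bool" where
  "zariski_dense_in n S X \<longleftrightarrow> S \<subseteq> X \<and> X \<subseteq> zariski_closure n S"

end

theory Submission
  imports Defs "Jordan_Normal_Form.Jordan_Normal_Form_Existence"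
begin

text \<open>
  Every \<open>A \<in> mats_k n k\<close> lies on an affine line \<open>A + t C\<close> whose points with \<open>t \<noteq> 0\<close> are
  diagonalizable matrices of \<open>mats_k n k\<close>. Write \<open>A = P J Q\<close> with \<open>J\<close> in Jordan form and replace
  each Jordan block of size \<open>m\<close> for the eigenvalue \<open>a\<close> by the upper triangular matrix with
  diagonal \<open>a, a + t, \<dots>, a + (m - 1) t\<close>; conjugating back by \<open>P, Q\<close> gives \<open>A + t C\<close>. For \<open>t \<noteq> 0\<close>
  each perturbed block has distinct eigenvalues, so \<open>A + t C\<close> is diagonalizable. As every block
  size for \<open>a\<close> is at most the multiplicity of \<open>a\<close> as a root of the minimal polynomial \<open>m\<^sub>A\<close>, the
  blocks for \<open>a\<close> produce at most that many eigenvalues, so the minimal polynomial of \<open>A + t C\<close>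
  has degree at most \<open>deg m\<^sub>A \<le> n - k\<close>. Finally, a polynomial in the matrix entries restricts to
  a univariate polynomial in \<open>t\<close> on the line; vanishing for all \<open>t \<noteq> 0\<close>, it also vanishes at \<open>A\<close>.
\<close>

section \<open>Evaluating polynomials at matrices\<close>

lemma pow_mat_Suc_left: "A \<in> carrier_mat n n \<Longrightarrow> A * A ^\<^sub>m r = A ^\<^sub>m Suc r"
proof (induct r)
  case (Suc r)
  have "A * A ^\<^sub>m Suc r = (A * A ^\<^sub>m r) * A"
    using Suc(2) by (simp add: assoc_mult_mat[of _ n n _ n _ n])
  then show ?case using Suc by simp
qed simp

lemma horner_mat_carrier: "A \<in> carrier_mat n n \<Longrightarrow> horner_mat n cs A \<in> carrier_mat n n"
  by (induct cs) auto

lemma horner_mat_index: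
  assumes A: "A \<in> carrier_mat n n" and "i < n" and "j < n"
  shows "horner_mat n cs A $$ (i,j) = (\<Sum>r<length cs. cs ! r * (A ^\<^sub>m r) $$ (i,j))"
  using assms(2,3)
proof (induct cs arbitrary: i j)
  case (Cons c cs)
  let ?H = "horner_mat n cs A"
  have H: "?H \<in> carrier_mat n n" using horner_mat_carrier[OF A] .
  have row_times_power: "(\<Sum>l<n. A $$ (i,l) * (A ^\<^sub>m r) $$ (l,j)) = (A ^\<^sub>m Suc r) $$ (i,j)" for r
    using Cons.prems A pow_mat_Suc_left[OF A, of r, symmetric]
    by (simp add: scalar_prod_def lessThan_atLeast0)
  have "(A * ?H) $$ (i,j) = (\<Sum>l<n. A $$ (i,l) * (\<Sum>r<length cs. cs ! r * (A ^\<^sub>m r) $$ (l,j)))"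
    using Cons A H by (simp add: scalar_prod_def lessThan_atLeast0)
  also have "\<dots> = (\<Sum>r<length cs. cs ! r * (\<Sum>l<n. A $$ (i,l) * (A ^\<^sub>m r) $$ (l,j)))"
    by (simp add: sum_distrib_left mult_ac sum.swap[of _ "{..<n}"])
  finally have "(A * ?H) $$ (i,j) = (\<Sum>r<length cs. cs ! r * (A ^\<^sub>m Suc r) $$ (i,j))"
    by (simp add: row_times_power)
  then show ?case
    using Cons.prems A H by (simp add: sum.lessThan_Suc_shift del: sum.lessThan_Suc)
qed simp

lemma poly_mat_carrier: "A \<in> carrier_mat n n \<Longrightarrow> poly_mat p A \<in> carrier_mat n n"
  unfolding poly_mat_def using horner_mat_carrier by auto

lemma poly_mat_index:
  assumes A: "A \<in> carrier_mat n n" and i: "i < n" and j: "j < n" and N: "degree p < N"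
  shows "poly_mat p A $$ (i,j) = (\<Sum>r<N. coeff p r * (A ^\<^sub>m r) $$ (i,j))"
proof -
  have len: "length (coeffs p) \<le> N"
    using N by (cases "p = 0") (auto simp: length_coeffs_degree)
  have coeff_0: "coeff p r = 0" if "length (coeffs p) \<le> r" for r
    using that by (cases "p = 0") (auto simp: length_coeffs_degree coeff_eq_0)
  have "poly_mat p A $$ (i,j) = (\<Sum>r<length (coeffs p). coeff p r * (A ^\<^sub>m r) $$ (i,j))"
    using A horner_mat_index[OF A i j, of "coeffs p"]
    by (auto simp: poly_mat_def nth_coeffs_coeff intro!: sum.cong)
  also have "\<dots> = (\<Sum>r<N. coeff p r * (A ^\<^sub>m r) $$ (i,j))"
    using len coeff_0 by (intro sum.mono_neutral_left) auto
  finally show ?thesis .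
qed

lemma poly_mat_eq_0_iff:
  "A \<in> carrier_mat n n \<Longrightarrow> poly_mat p A = 0\<^sub>m n n \<longleftrightarrow> (\<forall>i<n. \<forall>j<n. poly_mat p A $$ (i,j) = 0)"
  using poly_mat_carrier[of A n p] by (auto intro!: eq_matI)

lemma poly_mat_diff_eq_0:
  assumes A: "(A :: 'a :: field mat) \<in> carrier_mat n n"
    and "poly_mat p A = 0\<^sub>m n n" and "poly_mat q A = 0\<^sub>m n n"
  shows "poly_mat (p - q) A = 0\<^sub>m n n"
proof -
  define N where "N = Suc (max (degree p) (degree q))"
  have "degree p < N" "degree q < N" "degree (p - q) < N"
    unfolding N_def using degree_diff_le_max[of p q] by auto
  then show ?thesis
    using assms poly_mat_index[OF A] unfolding poly_mat_eq_0_iff[OF A]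
    by (simp add: sum_subtractf left_diff_distrib)
qed

lemma poly_mat_smult_eq_0:
  assumes A: "(A :: 'a :: field mat) \<in> carrier_mat n n" and "poly_mat p A = 0\<^sub>m n n"
  shows "poly_mat (smult c p) A = 0\<^sub>m n n"
proof -
  define N where "N = Suc (degree p)"
  have "degree p < N" "degree (smult c p) < N"
    unfolding N_def using degree_smult_le[of c p] by auto
  then show ?thesis
    using assms poly_mat_index[OF A] unfolding poly_mat_eq_0_iff[OF A]
    by (simp add: mult.assoc flip: sum_distrib_left)
qed

lemma is_min_poly_min_poly:
  assumes A: "(A :: 'a :: field mat) \<in> carrier_mat n n"
    and q: "q \<noteq> 0" "poly_mat q A = 0\<^sub>m n n"
  shows "is_min_poly A (min_poly A)"
proof -
  have dim: "dim_row A = n" using A by auto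
  define annihilates where "annihilates p \<longleftrightarrow> p \<noteq> 0 \<and> poly_mat p A = 0\<^sub>m n n" for p
  define d where "d = (LEAST d. \<exists>p. annihilates p \<and> degree p = d)"
  have "\<exists>p. annihilates p \<and> degree p = d"
    unfolding d_def by (rule LeastI[of _ "degree q"]) (use q annihilates_def in blast)
  then obtain p where p: "annihilates p" "degree p = d" by blast
  have d_least: "d \<le> degree p'" if "annihilates p'" for p'
    unfolding d_def using that by (blast intro: Least_le)
  define m where "m = smult (inverse (lead_coeff p)) p"
  have m: "lead_coeff m = 1" "annihilates m" "degree m = d"
    using p poly_mat_smult_eq_0[OF A] unfolding m_def annihilates_def by auto
  then have is_m: "is_min_poly A m"
    unfolding is_min_poly_def dim using d_least annihilates_def by auto
  have "m' = m" if m': "is_min_poly A m'" for m'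
  proof (rule ccontr)
    assume "m' \<noteq> m"
    have m'1: "lead_coeff m' = 1" and "annihilates m'"
      using m' unfolding is_min_poly_def dim annihilates_def by auto
    moreover have "degree m' \<le> degree m"
      using m' m(2) unfolding is_min_poly_def dim annihilates_def by blast
    ultimately have "degree m' = d" using d_least m(3) by fastforce
    \<comment> \<open>two monic annihilators of the least degree differ by an annihilator of smaller degree\<close>
    have "degree (m' - m) \<le> d" "coeff (m' - m) d = 0"
      using degree_diff_le_max[of m' m] m m'1 \<open>degree m' = d\<close> by auto
    then have "degree (m' - m) < d"
      using \<open>m' \<noteq> m\<close> leading_coeff_0_iff[of "m' - m"]
      by (cases "degree (m' - m) = d") (auto simp del: coeff_diff)
    moreover have "annihilates (m' - m)"
      using \<open>m' \<noteq> m\<close> \<open>annihilates m'\<close> m(2) poly_mat_diff_eq_0[OF A]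
      unfolding annihilates_def by auto
    ultimately show False using d_least by fastforce
  qed
  then have "min_poly A = m" unfolding min_poly_def using is_m by (rule the_equality[rotated])
  then show ?thesis using is_m by simp
qed

lemma degree_min_poly_le:
  assumes "(A :: 'a :: field mat) \<in> carrier_mat n n" and "q \<noteq> 0" and "poly_mat q A = 0\<^sub>m n n"
  shows "degree (min_poly A) \<le> degree q"
  using is_min_poly_min_poly[OF assms] assms unfolding is_min_poly_def by auto

section \<open>Polynomials of similar and of Jordan matrices\<close>

lemma horner_mat_similar:
  assumes P: "P \<in> carrier_mat n n" and Q: "Q \<in> carrier_mat n n" and B: "B \<in> carrier_mat n n"
    and PQ: "P * Q = 1\<^sub>m n" and QP: "Q * P = 1\<^sub>m n"
  shows "horner_mat n cs (P * B * Q) = P * horner_mat n cs B * Q"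
proof (induct cs)
  case Nil
  show ?case using P Q by simp
next
  case (Cons c cs)
  define H where "H = horner_mat n cs B"
  have H: "H \<in> carrier_mat n n" unfolding H_def using horner_mat_carrier[OF B] .
  have "P * (c \<cdot>\<^sub>m 1\<^sub>m n) * Q = c \<cdot>\<^sub>m 1\<^sub>m n"
    using P Q PQ by (simp add: mult_smult_distrib[of P n n "1\<^sub>m n" n] mult_smult_assoc_mat[of P n n])
  moreover have "(P * B * Q) * (P * H * Q) = P * B * (Q * P) * H * Q"
    using P Q B H by (simp add: assoc_mult_mat[of _ n n _ n _ n])
  then have "(P * B * Q) * (P * H * Q) = P * (B * H) * Q"
    using P Q B H QP by (simp add: assoc_mult_mat[of _ n n _ n _ n])
  moreover have "P * (c \<cdot>\<^sub>m 1\<^sub>m n + B * H) * Q = P * (c \<cdot>\<^sub>m 1\<^sub>m n) * Q + P * (B * H) * Q"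
    using P B H Q by (simp add: mult_add_distrib_mat[of P n n _ n] add_mult_distrib_mat[of _ n n _ Q n])
  ultimately show ?case using Cons unfolding H_def by simp
qed

lemma poly_mat_similar_eq_0:
  assumes "similar_mat A B" and "poly_mat q B = 0\<^sub>m (dim_row B) (dim_row B)"
  shows "poly_mat q A = 0\<^sub>m (dim_row A) (dim_row A)"
proof -
  from similar_matD[OF assms(1)] obtain n P Q where
    c: "{A,B,P,Q} \<subseteq> carrier_mat n n" and "P * Q = 1\<^sub>m n" "Q * P = 1\<^sub>m n" and AB: "A = P * B * Q"
    by blast
  then have "poly_mat q A = P * horner_mat n (coeffs q) B * Q"
    unfolding poly_mat_def AB by (auto intro: horner_mat_similar)
  then show ?thesis using assms(2) c unfolding poly_mat_def by auto
qed

lemma horner_mat_four_block: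
  assumes X: "X \<in> carrier_mat a a" and Y: "Y \<in> carrier_mat b b"
  shows "horner_mat (a + b) cs (four_block_mat X (0\<^sub>m a b) (0\<^sub>m b a) Y)
    = four_block_mat (horner_mat a cs X) (0\<^sub>m a b) (0\<^sub>m b a) (horner_mat b cs Y)"
proof (induct cs)
  case (Cons c cs)
  define H1 where "H1 = horner_mat a cs X"
  define H2 where "H2 = horner_mat b cs Y"
  have H: "H1 \<in> carrier_mat a a" "H2 \<in> carrier_mat b b"
    unfolding H1_def H2_def using horner_mat_carrier X Y by auto
  have "horner_mat (a + b) (c # cs) (four_block_mat X (0\<^sub>m a b) (0\<^sub>m b a) Y)
     = c \<cdot>\<^sub>m four_block_mat (1\<^sub>m a) (0\<^sub>m a b) (0\<^sub>m b a) (1\<^sub>m b)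
       + four_block_mat X (0\<^sub>m a b) (0\<^sub>m b a) Y * four_block_mat H1 (0\<^sub>m a b) (0\<^sub>m b a) H2"
    using Cons unfolding H1_def H2_def by simp
  also have "\<dots> = four_block_mat (c \<cdot>\<^sub>m 1\<^sub>m a + X * H1) (0\<^sub>m a b) (0\<^sub>m b a) (c \<cdot>\<^sub>m 1\<^sub>m b + Y * H2)"
    using X Y H
    by (simp add: smult_four_block_mat[of _ a a _ b _ b] mult_four_block_mat[of _ a a _ b _ b _ _ a _ b]
       add_four_block_mat[of _ a a _ b _ b] del: four_block_one_mat)
  finally show ?case unfolding H1_def H2_def by simp
qed simp

lemma four_block_diag_eq_0_iff:
  assumes X: "X \<in> carrier_mat a a" and Y: "Y \<in> carrier_mat b b"
  shows "four_block_mat X (0\<^sub>m a b) (0\<^sub>m b a) Y = 0\<^sub>m (a + b) (a + b) \<longleftrightarrow> X = 0\<^sub>m a a \<and> Y = 0\<^sub>m b b"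
proof
  assume z: "four_block_mat X (0\<^sub>m a b) (0\<^sub>m b a) Y = 0\<^sub>m (a + b) (a + b)"
  have "X $$ (i,j) = 0" if "i < a" "j < a" for i j
    using arg_cong[OF z, of "\<lambda>M. M $$ (i,j)"] X Y that by simp
  moreover have "Y $$ (i,j) = 0" if "i < b" "j < b" for i j
    using arg_cong[OF z, of "\<lambda>M. M $$ (i + a, j + a)"] X Y that by simp
  ultimately show "X = 0\<^sub>m a a \<and> Y = 0\<^sub>m b b" using X Y by (auto intro!: eq_matI)
qed simp

lemma poly_mat_jordan_matrix_eq_0_iff:
  "poly_mat q (jordan_matrix L) = 0\<^sub>m (sum_list (map fst L)) (sum_list (map fst L))
   \<longleftrightarrow> (\<forall>(m,c)\<in>set L. poly_mat q (jordan_block m c) = 0\<^sub>m m m)"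
proof (induct L)
  case Nil
  have "poly_mat q (jordan_matrix []) \<in> carrier_mat 0 0"
    using poly_mat_carrier[OF jordan_matrix_carrier[of "[] :: (nat \<times> 'a) list"]] by simp
  then show ?case by (auto intro!: eq_matI)
next
  case (Cons mc L)
  obtain m c where mc: "mc = (m,c)" by force
  let ?s = "sum_list (map fst L)"
  have "poly_mat q (jordan_matrix (mc # L))
    = four_block_mat (poly_mat q (jordan_block m c)) (0\<^sub>m m ?s) (0\<^sub>m ?s m) (poly_mat q (jordan_matrix L))"
    unfolding mc jordan_matrix_Cons poly_mat_def by (simp add: horner_mat_four_block[of _ m _ ?s])
  moreover have "poly_mat q (jordan_block m c) \<in> carrier_mat m m"
    by (rule poly_mat_carrier, simp)
  moreover have "poly_mat q (jordan_matrix L) \<in> carrier_mat ?s ?s"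
    by (rule poly_mat_carrier, simp)
  ultimately show ?case
    using Cons mc four_block_diag_eq_0_iff[of "poly_mat q (jordan_block m c)" m "poly_mat q (jordan_matrix L)" ?s]
    by (simp del: four_block_zero_mat)
qed

lemma pcompose_monom_eq_smult_power: "pcompose (monom c r) p = smult c (p ^ r)"
  by (induct r) (auto simp: monom_Suc pcompose_pCons monom_0)

lemma pcompose_power_left: "pcompose (p ^ k) r = (pcompose p r) ^ k"
  by (induct k) (auto simp: pcompose_mult pcompose_1)

lemma coeff_pcompose_shift:
  fixes q :: "'a :: comm_ring_1 poly"
  assumes N: "degree q < N"
  shows "coeff (pcompose q [:a,1:]) d = (\<Sum>r<N. coeff q r * (of_nat (r choose d) * a ^ (r - d)))"
proof -
  have "q = (\<Sum>r<N. monom (coeff q r) r)"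
    using N by (intro poly_eqI) (auto simp: coeff_sum coeff_monom coeff_eq_0)
  then have "pcompose q [:a,1:] = pcompose (\<Sum>r<N. monom (coeff q r) r) [:a,1:]"
    by simp
  also have "\<dots> = (\<Sum>r<N. smult (coeff q r) ([:a,1:] ^ r))"
    by (simp add: pcompose_sum pcompose_monom_eq_smult_power)
  finally have "pcompose q [:a,1:] = (\<Sum>r<N. smult (coeff q r) ([:a,1:] ^ r))" .
  moreover have "coeff ([:a,1:] ^ r) d = of_nat (r choose d) * a ^ (r - d)" for r
  proof (cases "d \<le> r")
    case False
    have "degree ([:a,1:] ^ r) \<le> r"
      using degree_power_le[of "[:a,1:]" r] by simp
    then show ?thesis using False by (simp add: coeff_eq_0 binomial_eq_0)
  qed (simp add: coeff_linear_poly_power)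
  ultimately show ?thesis by (simp add: coeff_sum)
qed

lemma poly_mat_jordan_block_index:
  fixes q :: "'a :: field poly"
  assumes "i < m" and "j < m"
  shows "poly_mat q (jordan_block m a) $$ (i,j) = (if i \<le> j then coeff (pcompose q [:a,1:]) (j - i) else 0)"
proof -
  have N: "degree q < Suc (degree q)" by simp
  have "r + i - j = r - (j - i)" if "i \<le> j" for r using that by auto
  then show ?thesis
    using assms poly_mat_index[OF jordan_block_carrier assms N]
    by (simp add: jordan_block_pow coeff_pcompose_shift[OF N] del: sum.lessThan_Suc)
qed

lemma linear_power_dvd_iff_pcompose:
  fixes q :: "'a :: comm_ring_1 poly"
  shows "[:-a,1:] ^ m dvd q \<longleftrightarrow> monom 1 m dvd pcompose q [:a,1:]"
proof -
  have shift: "pcompose [:-a,1:] [:a,1:] = [:0,1:]" "pcompose [:0,1:] [:-a,1:] = [:-a,1:]"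
    "pcompose [:a,1:] [:-a,1:] = [:0,1:]"
    by (simp_all add: pcompose_pCons)
  have m: "monom (1::'a) m = [:0,1:] ^ m" by (simp add: monom_altdef)
  show ?thesis
  proof
    assume "[:-a,1:] ^ m dvd q"
    then obtain h where "q = [:-a,1:] ^ m * h" by (erule dvdE)
    then show "monom 1 m dvd pcompose q [:a,1:]"
      unfolding m by (simp add: pcompose_mult pcompose_power_left shift)
  next
    assume "monom 1 m dvd pcompose q [:a,1:]"
    then obtain h where h: "pcompose q [:a,1:] = [:0,1:] ^ m * h" unfolding m by (erule dvdE)
    have "q = pcompose (pcompose q [:a,1:]) [:-a,1:]"
      by (simp add: pcompose_assoc[symmetric] shift)
    also have "\<dots> = [:-a,1:] ^ m * pcompose h [:-a,1:]"
      unfolding h by (simp add: pcompose_mult pcompose_power_left shift)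
    finally show "[:-a,1:] ^ m dvd q" by simp
  qed
qed

lemma poly_mat_jordan_block_eq_0_iff:
  fixes q :: "'a :: field poly"
  shows "poly_mat q (jordan_block m a) = 0\<^sub>m m m \<longleftrightarrow> [:-a,1:] ^ m dvd q"
proof -
  have "poly_mat q (jordan_block m a) = 0\<^sub>m m m \<longleftrightarrow> (\<forall>d<m. coeff (pcompose q [:a,1:]) d = 0)"
    unfolding poly_mat_eq_0_iff[OF jordan_block_carrier]
    by (auto simp: poly_mat_jordan_block_index)
  also have "\<dots> \<longleftrightarrow> monom 1 m dvd pcompose q [:a,1:]" by (simp add: monom_1_dvd_iff')
  finally show ?thesis by (simp add: linear_power_dvd_iff_pcompose)
qed

section \<open>Minimal polynomials and Jordan normal forms\<close>

lemma jordan_nf_exists_complex: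
  assumes "(A :: complex mat) \<in> carrier_mat n n"
  obtains L where "jordan_nf A L"
  using char_poly_factorized[OF assms] jordan_nf_exists[OF assms] by blast

lemma jordan_nf_similar: "similar_mat A B \<Longrightarrow> jordan_nf B L \<Longrightarrow> jordan_nf A L"
  unfolding jordan_nf_def using similar_mat_trans by blast

lemma is_min_poly_min_poly_complex:
  assumes A: "(A :: complex mat) \<in> carrier_mat n n"
  shows "is_min_poly A (min_poly A)"
proof -
  obtain L where jnf: "jordan_nf A L" using jordan_nf_exists_complex[OF A] .
  define q where "q = (\<Prod>(m,a)\<leftarrow>L. [:-a,1:] ^ m)"
  have "q \<noteq> 0" unfolding q_def by (auto simp: prod_list_zero_iff)
  moreover have "poly_mat q (jordan_matrix L) = 0\<^sub>m (sum_list (map fst L)) (sum_list (map fst L))"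
    unfolding poly_mat_jordan_matrix_eq_0_iff poly_mat_jordan_block_eq_0_iff q_def
    by (auto intro!: prod_list_dvd)
  then have "poly_mat q A = 0\<^sub>m n n"
    using poly_mat_similar_eq_0[of A "jordan_matrix L" q] jnf A unfolding jordan_nf_def by simp
  ultimately show ?thesis using is_min_poly_min_poly[OF A] by blast
qed

lemma jordan_block_size_le_order_min_poly:
  assumes A: "(A :: complex mat) \<in> carrier_mat n n" and jnf: "jordan_nf A L" and "(m,a) \<in> set L"
  shows "m \<le> order a (min_poly A)"
proof -
  have "min_poly A \<noteq> 0" and "poly_mat (min_poly A) A = 0\<^sub>m n n"
    using is_min_poly_min_poly_complex[OF A] A unfolding is_min_poly_def by auto
  moreover have "poly_mat (min_poly A) (jordan_matrix L)
      = 0\<^sub>m (sum_list (map fst L)) (sum_list (map fst L))"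
    using poly_mat_similar_eq_0[OF similar_mat_sym, of A "jordan_matrix L"] jnf A calculation(2)
    unfolding jordan_nf_def by simp
  ultimately show ?thesis
    using assms(3) unfolding poly_mat_jordan_matrix_eq_0_iff poly_mat_jordan_block_eq_0_iff
    by (auto simp: order_divides)
qed

lemma jordan_matrix_diagonal:
  assumes "\<forall>(m,c)\<in>set L. m = 1"
  shows "diagonal_mat (jordan_matrix L)"
  using assms
proof (induct L)
  case Nil
  then show ?case by (simp add: diagonal_mat_def jordan_matrix_def)
next
  case (Cons mc L)
  obtain c where mc: "mc = (1,c)" using Cons.prems by force
  have IH: "diagonal_mat (jordan_matrix L)" using Cons by auto
  let ?s = "sum_list (map fst L)"
  show ?case
    unfolding diagonal_mat_def mc jordan_matrix_Cons
  proof (intro allI impI)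
    fix i j
    assume "i < dim_row (four_block_mat (jordan_block 1 c) (0\<^sub>m 1 ?s) (0\<^sub>m ?s 1) (jordan_matrix L))"
      and "j < dim_col (four_block_mat (jordan_block 1 c) (0\<^sub>m 1 ?s) (0\<^sub>m ?s 1) (jordan_matrix L))"
      and "i \<noteq> j"
    then show "four_block_mat (jordan_block 1 c) (0\<^sub>m 1 ?s) (0\<^sub>m ?s 1) (jordan_matrix L) $$ (i, j) = 0"
      using IH unfolding diagonal_mat_def by auto
  qed
qed

lemma diagonalizable_if_jordan_nf_blocks_1:
  assumes "jordan_nf B cs" and "\<forall>(m,c)\<in>set cs. m = 1"
  shows "diagonalizable B"
proof -
  have sim: "similar_mat B (jordan_matrix cs)" using assms(1) unfolding jordan_nf_def by simp
  from similar_matD[OF sim] obtain k P Q where "{B, jordan_matrix cs, P, Q} \<subseteq> carrier_mat k k"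
    by blast
  then have "jordan_matrix cs \<in> carrier_mat (dim_row B) (dim_row B)" by auto
  then show ?thesis
    unfolding diagonalizable_def using sim jordan_matrix_diagonal[OF assms(2)] by blast
qed

lemma degree_min_poly_le_card_eigenvalues:
  assumes B: "(B :: 'a :: field mat) \<in> carrier_mat n n" and jnf: "jordan_nf B cs"
    and blocks: "\<forall>(m,c)\<in>set cs. m = 1 \<and> c \<in> R" and R: "finite R"
  shows "degree (min_poly B) \<le> card R"
proof -
  define q where "q = (\<Prod>x\<in>R. [:-x,1:])"
  have q: "q \<noteq> 0" "degree q = card R"
    unfolding q_def using R by (auto simp: degree_prod_sum_eq)
  have "poly_mat q (jordan_matrix cs) = 0\<^sub>m (sum_list (map fst cs)) (sum_list (map fst cs))"
    unfolding poly_mat_jordan_matrix_eq_0_iff poly_mat_jordan_block_eq_0_iff q_def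
  proof (intro ballI, clarify)
    fix m c assume "(m,c) \<in> set cs"
    then have "m = 1" "c \<in> R" using blocks by auto
    then show "[:-c,1:] ^ m dvd (\<Prod>x\<in>R. [:-x,1:])" using dvd_prodI[OF R, of c "\<lambda>x. [:-x,1:]"] by simp
  qed
  then have "poly_mat q B = 0\<^sub>m n n"
    using poly_mat_similar_eq_0[of B "jordan_matrix cs" q] jnf B unfolding jordan_nf_def by simp
  then show ?thesis using degree_min_poly_le[OF B q(1)] q(2) by simp
qed

section \<open>Spreading the eigenvalues of Jordan blocks\<close>

lemma proots_prod_list_linear: "proots (\<Prod>x\<leftarrow>xs. [:-x,1:]) = mset xs"
proof -
  have "proots (\<Prod>x\<leftarrow>xs. [:-x,1:]) = proots (\<Prod>p\<leftarrow>map (\<lambda>x. [:-x,1:]) xs. p)"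
    by (simp add: o_def)
  also have "\<dots> = (\<Sum>p\<leftarrow>map (\<lambda>x. [:-x,1:]) xs. proots p)"
    by (rule proots_prod_list) auto
  also have "\<dots> = mset xs" by (induct xs) auto
  finally show ?thesis .
qed

lemma jordan_nf_upper_triangular_distinct_diag:
  assumes A: "(A :: complex mat) \<in> carrier_mat n n" and "upper_triangular A"
    and dist: "distinct (diag_mat A)"
  obtains bs where "jordan_nf A bs" and "\<forall>(m,c)\<in>set bs. m = 1 \<and> c \<in> set (diag_mat A)"
proof -
  let ?xs = "diag_mat A"
  have cp: "char_poly A = (\<Prod>x\<leftarrow>?xs. [:-x,1:])"
    using char_poly_upper_triangular[OF A assms(2)] .
  obtain bs where jnf: "jordan_nf A bs" using jordan_nf_exists[OF A cp] by blast
  have "char_poly A \<noteq> 0" unfolding cp by (auto simp: prod_list_zero_iff)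
  then have "order c (char_poly A) = count (mset ?xs) c" for c
    using count_proots[of "char_poly A" c] unfolding cp proots_prod_list_linear by simp
  then have order: "order c (char_poly A) = (if c \<in> set ?xs then 1 else 0)" for c
    using dist by (simp add: distinct_count_atmost_1)
  have "m = 1 \<and> c \<in> set ?xs" if "(m,c) \<in> set bs" for m c
  proof -
    have "m \<noteq> 0" using jnf that unfolding jordan_nf_def by force
    moreover have "m \<le> order c (char_poly A)"
      using jordan_nf_block_size_order_bound[OF jnf that] .
    ultimately show ?thesis unfolding order by (auto split: if_splits)
  qed
  with jnf that show ?thesis by blast
qed

definition spread_block :: "nat \<Rightarrow> complex \<Rightarrow> complex \<Rightarrow> complex mat" where
  "spread_block m a t = mat m m (\<lambda>(i,j). if i = j then a + t * of_nat i else if Suc i = j then 1 else 0)"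

lemma spread_block_carrier [simp]: "spread_block m a t \<in> carrier_mat m m"
  and spread_block_dim [simp]: "dim_row (spread_block m a t) = m" "dim_col (spread_block m a t) = m"
  unfolding spread_block_def by auto

lemma spread_block_index [simp]:
  "i < m \<Longrightarrow> j < m \<Longrightarrow>
    spread_block m a t $$ (i,j) = (if i = j then a + t * of_nat i else if Suc i = j then 1 else 0)"
  unfolding spread_block_def by auto

lemma spread_block_0: "spread_block m a 0 = jordan_block m a"
  by (rule eq_matI) auto

lemma jordan_nf_spread_block:
  assumes "t \<noteq> 0"
  obtains bs where "jordan_nf (spread_block m a t) bs"
    and "\<forall>(k,c)\<in>set bs. k = 1 \<and> c \<in> (\<lambda>i. a + t * of_nat i) ` {..<m}"
proof -
  have diag: "diag_mat (spread_block m a t) = map (\<lambda>i. a + t * of_nat i) [0..<m]"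
    unfolding diag_mat_def by auto
  have "upper_triangular (spread_block m a t)" unfolding upper_triangular_def by auto
  moreover have "distinct (diag_mat (spread_block m a t))"
    unfolding diag using assms by (auto simp: distinct_map inj_on_def)
  ultimately obtain bs where "jordan_nf (spread_block m a t) bs"
    and "\<forall>(k,c)\<in>set bs. k = 1 \<and> c \<in> set (diag_mat (spread_block m a t))"
    using jordan_nf_upper_triangular_distinct_diag[OF spread_block_carrier] by blast
  then show ?thesis by (intro that[of bs]) (auto simp: diag atLeast0LessThan)
qed

definition spread_jordan_matrix :: "(nat \<times> complex) list \<Rightarrow> complex \<Rightarrow> complex mat" where
  "spread_jordan_matrix L t = diag_block_mat (map (\<lambda>(m,a). spread_block m a t) L)"

definition spread_eigenvalues :: "(nat \<times> complex) list \<Rightarrow> complex \<Rightarrow> complex set" where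
  "spread_eigenvalues L t = (\<Union>(m,a)\<in>set L. (\<lambda>i. a + t * of_nat i) ` {..<m})"

lemma spread_jordan_matrix_dim [simp]:
  "dim_row (spread_jordan_matrix L t) = sum_list (map fst L)"
  "dim_col (spread_jordan_matrix L t) = sum_list (map fst L)"
  unfolding spread_jordan_matrix_def by (induct L) (auto simp: Let_def)

lemma spread_jordan_matrix_carrier:
  "spread_jordan_matrix L t \<in> carrier_mat (sum_list (map fst L)) (sum_list (map fst L))"
  unfolding carrier_mat_def by simp

lemma finite_spread_eigenvalues: "finite (spread_eigenvalues L t)"
  unfolding spread_eigenvalues_def by auto

lemma spread_jordan_matrix_0: "spread_jordan_matrix L 0 = jordan_matrix L"
  unfolding spread_jordan_matrix_def jordan_matrix_def by (simp add: spread_block_0 case_prod_unfold)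

lemma spread_jordan_matrix_index_affine:
  "i < sum_list (map fst L) \<Longrightarrow> j < sum_list (map fst L) \<Longrightarrow>
   spread_jordan_matrix L t $$ (i,j)
     = spread_jordan_matrix L 0 $$ (i,j) + t * (spread_jordan_matrix L 1 $$ (i,j) - spread_jordan_matrix L 0 $$ (i,j))"
proof (induct L arbitrary: i j)
  case (Cons mc L)
  obtain m c where mc: "mc = (m,c)" by force
  have "spread_jordan_matrix ((m,c) # L) s = four_block_mat (spread_block m c s)
      (0\<^sub>m m (sum_list (map fst L))) (0\<^sub>m (sum_list (map fst L)) m) (spread_jordan_matrix L s)" for s
    unfolding spread_jordan_matrix_def by (simp add: Let_def spread_jordan_matrix_def[symmetric])
  then show ?case using Cons unfolding mc by (auto simp: algebra_simps)
qed simp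

lemma jordan_nf_spread_jordan_matrix:
  assumes "t \<noteq> 0"
  obtains cs where "jordan_nf (spread_jordan_matrix L t) cs"
    and "\<forall>(k,c)\<in>set cs. k = 1 \<and> c \<in> spread_eigenvalues L t"
proof -
  have "\<forall>y\<in>set L. \<exists>bs. jordan_nf (spread_block (fst y) (snd y) t) bs
      \<and> (\<forall>(k,c)\<in>set bs. k = 1 \<and> c \<in> (\<lambda>i. snd y + t * of_nat i) ` {..<fst y})"
    using jordan_nf_spread_block[OF assms] by metis
  then obtain f where f: "\<And>y. y \<in> set L \<Longrightarrow> jordan_nf (spread_block (fst y) (snd y) t) (f y)
      \<and> (\<forall>(k,c)\<in>set (f y). k = 1 \<and> c \<in> (\<lambda>i. snd y + t * of_nat i) ` {..<fst y})"
    by metis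
  define Ms where "Ms = map (\<lambda>y. (spread_block (fst y) (snd y) t, f y)) L"
  have "jordan_nf (diag_block_mat (map fst Ms)) (concat (map snd Ms))"
    by (rule jordan_nf_diag_block_mat) (auto simp: Ms_def dest: f)
  moreover have "diag_block_mat (map fst Ms) = spread_jordan_matrix L t"
    unfolding Ms_def spread_jordan_matrix_def by (simp add: case_prod_unfold o_def)
  moreover have "\<forall>(k,c)\<in>set (concat (map snd Ms)). k = 1 \<and> c \<in> spread_eigenvalues L t"
    using f unfolding Ms_def spread_eigenvalues_def by fastforce
  ultimately show ?thesis using that by metis
qed

lemma similar_line_spread_jordan_matrix:
  assumes A: "A \<in> carrier_mat n n" and sim: "similar_mat A (jordan_matrix L)"
  obtains C where "C \<in> carrier_mat n n" and "\<And>t. similar_mat (A + t \<cdot>\<^sub>m C) (spread_jordan_matrix L t)"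
proof -
  from similar_matD[OF sim] obtain P Q where
    c: "{A, jordan_matrix L, P, Q} \<subseteq> carrier_mat n n" and PQ: "P * Q = 1\<^sub>m n" "Q * P = 1\<^sub>m n"
    and AJ: "A = P * jordan_matrix L * Q"
    using A by fastforce
  have P: "P \<in> carrier_mat n n" and Q: "Q \<in> carrier_mat n n" using c by auto
  have L: "sum_list (map fst L) = n" using c by auto
  then have J: "spread_jordan_matrix L t \<in> carrier_mat n n" for t
    using spread_jordan_matrix_carrier[of L t] by simp
  define E where "E = spread_jordan_matrix L 1 - spread_jordan_matrix L 0"
  have E: "E \<in> carrier_mat n n" unfolding E_def using J by (intro minus_carrier_mat)
  define C where "C = P * E * Q"
  have C: "C \<in> carrier_mat n n" unfolding C_def using P Q E by auto
  have J_affine: "spread_jordan_matrix L t = spread_jordan_matrix L 0 + t \<cdot>\<^sub>m E" for t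
    using J E L spread_jordan_matrix_index_affine[of _ L _ t] unfolding E_def
    by (intro eq_matI) auto
  have "P * spread_jordan_matrix L t * Q = A + t \<cdot>\<^sub>m C" for t
  proof -
    have "P * (spread_jordan_matrix L 0 + t \<cdot>\<^sub>m E) * Q
        = P * spread_jordan_matrix L 0 * Q + P * (t \<cdot>\<^sub>m E) * Q"
      using P Q J E by (simp add: mult_add_distrib_mat[of P n n _ n] add_mult_distrib_mat[of _ n n _ Q n])
    also have "P * (t \<cdot>\<^sub>m E) * Q = t \<cdot>\<^sub>m C"
      unfolding C_def using P E Q
      by (simp add: mult_smult_distrib[of P n n E n] mult_smult_assoc_mat[of _ n n Q n])
    finally show ?thesis using AJ J_affine[of t] by (simp add: spread_jordan_matrix_0)
  qed
  then have "similar_mat (A + t \<cdot>\<^sub>m C) (spread_jordan_matrix L t)" for t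
    using A C J P Q PQ by (intro similar_matI[of _ _ P Q n]) auto
  with C that show ?thesis by blast
qed

lemma card_spread_eigenvalues_le:
  assumes A: "(A :: complex mat) \<in> carrier_mat n n" and jnf: "jordan_nf A L"
  shows "card (spread_eigenvalues L t) \<le> degree (min_poly A)"
proof -
  let ?p = "min_poly A"
  let ?E = "snd ` set L"
  have p: "?p \<noteq> 0" using is_min_poly_min_poly_complex[OF A] unfolding is_min_poly_def by auto
  have size_le: "m \<le> order a ?p" if "(m,a) \<in> set L" for m a
    using jordan_block_size_le_order_min_poly[OF A jnf that] .
  have "spread_eigenvalues L t \<subseteq> (\<Union>a\<in>?E. (\<lambda>i. a + t * of_nat i) ` {..<order a ?p})"
    unfolding spread_eigenvalues_def using size_le by force
  then have "card (spread_eigenvalues L t) \<le> card (\<Union>a\<in>?E. (\<lambda>i. a + t * of_nat i) ` {..<order a ?p})"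
    by (intro card_mono) auto
  also have "\<dots> \<le> (\<Sum>a\<in>?E. card ((\<lambda>i. a + t * of_nat i) ` {..<order a ?p}))"
    by (intro card_UN_le) simp
  also have "\<dots> \<le> (\<Sum>a\<in>?E. order a ?p)"
    by (intro sum_mono order_trans[OF card_image_le]) simp_all
  \<comment> \<open>Jordan blocks are nonempty, so each eigenvalue is a root of the minimal polynomial\<close>
  also have "\<dots> \<le> (\<Sum>a | poly ?p a = 0. order a ?p)"
  proof (rule sum_mono2)
    show "finite {a. poly ?p a = 0}" using poly_roots_finite[OF p] .
    show "?E \<subseteq> {a. poly ?p a = 0}"
    proof
      fix a assume "a \<in> ?E"
      then obtain m where "(m,a) \<in> set L" by force
      moreover then have "m \<noteq> 0" using jnf unfolding jordan_nf_def by force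
      ultimately have "order a ?p \<noteq> 0" using size_le by fastforce
      then show "a \<in> {a. poly ?p a = 0}" using p by (simp add: order_root)
    qed
  qed simp
  also have "\<dots> \<le> degree ?p" using sum_order_le_degree[OF p] .
  finally show ?thesis .
qed

section \<open>Zariski closure along lines\<close>

lemma mat_polyfun_on_line:
  assumes "f \<in> mat_polyfun n" and A: "A \<in> carrier_mat n n" and C: "C \<in> carrier_mat n n"
  shows "\<exists>p. \<forall>t. f (A + t \<cdot>\<^sub>m C) = poly p t"
  using assms(1)
proof (induct rule: mat_polyfun.induct)
  case (const c)
  show ?case by (rule exI[of _ "[:c:]"]) simp
next
  case (entry i j)
  show ?case by (rule exI[of _ "[:A $$ (i,j), C $$ (i,j):]"]) (use entry A C in \<open>auto simp: algebra_simps\<close>)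
next
  case (add f g)
  then obtain p q where "\<forall>t. f (A + t \<cdot>\<^sub>m C) = poly p t" "\<forall>t. g (A + t \<cdot>\<^sub>m C) = poly q t" by blast
  then show ?case by (intro exI[of _ "p + q"]) simp
next
  case (mult f g)
  then obtain p q where "\<forall>t. f (A + t \<cdot>\<^sub>m C) = poly p t" "\<forall>t. g (A + t \<cdot>\<^sub>m C) = poly q t" by blast
  then show ?case by (intro exI[of _ "p * q"]) simp
qed

lemma zariski_closure_if_punctured_line:
  assumes A: "A \<in> carrier_mat n n" and C: "C \<in> carrier_mat n n"
    and line: "\<And>t. t \<noteq> 0 \<Longrightarrow> A + t \<cdot>\<^sub>m C \<in> S"
  shows "A \<in> zariski_closure n S"
  unfolding zariski_closure_def
proof (intro InterI, clarify)
  fix Z assume "zariski_closed n Z" and SZ: "S \<subseteq> Z"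
  then obtain F where F: "F \<subseteq> mat_polyfun n" and Z: "Z = {B \<in> carrier_mat n n. \<forall>f\<in>F. f B = 0}"
    unfolding zariski_closed_def by blast
  have "f A = 0" if f: "f \<in> F" for f
  proof -
    obtain p where p: "\<And>t. f (A + t \<cdot>\<^sub>m C) = poly p t"
      using mat_polyfun_on_line[OF subsetD[OF F f] A C] by blast
    have "poly p t = 0" if "t \<noteq> 0" for t
    proof -
      have "A + t \<cdot>\<^sub>m C \<in> Z" using line[OF that] SZ by blast
      then show ?thesis using Z f p[of t] by auto
    qed
    have "p = 0"
    proof (rule ccontr)
      assume "p \<noteq> 0"
      then have "finite {t. poly p t = 0}" by (rule poly_roots_finite)
      moreover have "UNIV - {0} \<subseteq> {t. poly p t = 0}" using \<open>\<And>t. t \<noteq> 0 \<Longrightarrow> poly p t = 0\<close> by blast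
      ultimately have "finite (UNIV - {0 :: complex})" by (rule finite_subset[rotated])
      then show False by (simp add: infinite_UNIV_char_0)
    qed
    moreover have "A + 0 \<cdot>\<^sub>m C = A" using A C by (intro eq_matI) auto
    ultimately show ?thesis using p[of 0] by simp
  qed
  then show "A \<in> Z" using Z A by auto
qed

theorem proposition2p1:
  fixes n k :: nat
  assumes "n \<ge> 2" and "k < n"
  shows "zariski_dense_in n {A \<in> mats_k n k. diagonalizable A} (mats_k n k)"
proof -
  have "A \<in> zariski_closure n {A \<in> mats_k n k. diagonalizable A}" if "A \<in> mats_k n k" for A
  proof -
    have A: "A \<in> carrier_mat n n" and deg: "degree (min_poly A) \<le> n - k"
      using that unfolding mats_k_def by auto
    obtain L where jnf: "jordan_nf A L" using jordan_nf_exists_complex[OF A] .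
    then obtain C where C: "C \<in> carrier_mat n n"
      and sim: "\<And>t. similar_mat (A + t \<cdot>\<^sub>m C) (spread_jordan_matrix L t)"
      using similar_line_spread_jordan_matrix[OF A] unfolding jordan_nf_def by blast
    show ?thesis
    proof (rule zariski_closure_if_punctured_line[OF A C])
      fix t :: complex assume "t \<noteq> 0"
      then obtain cs where jnf_t: "jordan_nf (spread_jordan_matrix L t) cs"
        and cs: "\<forall>(m,c)\<in>set cs. m = 1 \<and> c \<in> spread_eigenvalues L t"
        by (rule jordan_nf_spread_jordan_matrix)
      have M: "A + t \<cdot>\<^sub>m C \<in> carrier_mat n n" using A C by auto
      have "degree (min_poly (A + t \<cdot>\<^sub>m C)) \<le> card (spread_eigenvalues L t)"
        using degree_min_poly_le_card_eigenvalues[OF M jordan_nf_similar[OF sim jnf_t] cs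
            finite_spread_eigenvalues] .
      also have "\<dots> \<le> n - k" using order_trans[OF card_spread_eigenvalues_le[OF A jnf] deg] .
      finally show "A + t \<cdot>\<^sub>m C \<in> {A \<in> mats_k n k. diagonalizable A}"
        using M diagonalizable_if_jordan_nf_blocks_1[OF jordan_nf_similar[OF sim jnf_t]] cs
        unfolding mats_k_def by auto
    qed
  qed
  then show ?thesis unfolding zariski_dense_in_def by blast
qed

end
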